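(* There exists a family of quantum circuits, one for each $n\ge1$, of depth $O(1)$ (independent of $n$) and size $O(n2^n)$, such that the $n$-th circuit implements exactly the quantum operation $\mathrm{OR}_n$.
   Context: Quantum circuits are built from elementary gates: arbitrary one-qubit gates, CNOT gates, and unbounded fan-out gates. An unbounded fan-out gate on $k+1$ qubits ($k\ge1$) maps $|y\rangle\bigotimes_{j=0}^{k-1}|x_j\rangle \mapsto |y\rangle\bigotimes_{j=0}^{k-1}|x_j\oplus y\rangle$. Circuits may use ancillary qubits initialized to $|0\rangle$. The size of a circuit is the total over its gates of the number of qubits each gate acts on; the depth is the number of layers (input qubits have depth 0, a gate has depth 1 plus the maximal depth of gates it depends on). $\mathrm{OR}_n(x)=1$ if $x\in\{0,1\}^n$ is nonzero and $0$ otherwise; the quantum operation $\mathrm{OR}_n$ maps $\bigl(\bigotimes_{j=0}^{n-1}|x_j\rangle\bigr)|z\rangle\mapsto\bigl(\bigotimes_{j}|x_j\rangle\bigr)|z\oplus\mathrm{OR}_n(x)\rangle$. *)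

theory Defs
  imports Complex_Main
begin

text \<open>A computational basis state is a function nat => bool (wire i holds bit b i);
  a state is an amplitude function on basis states.\<close>

datatype gate =
    G1 nat "bool \<Rightarrow> bool \<Rightarrow> complex"   (* one-qubit gate U on wire q; U out in *)
  | CNOT nat nat                          (* control, target *)
  | Fanout nat "nat list"                 (* control y, targets x_0 .. x_{k-1} *)

type_synonym state = "(nat \<Rightarrow> bool) \<Rightarrow> complex"

fun gate_wires :: "gate \<Rightarrow> nat list" where
  "gate_wires (G1 q U) = [q]"
| "gate_wires (CNOT c t) = [c, t]"
| "gate_wires (Fanout y ts) = y # ts"

definition unitary2 :: "(bool \<Rightarrow> bool \<Rightarrow> complex) \<Rightarrow> bool" where
  "unitary2 U \<longleftrightarrow> (\<forall>i j. (\<Sum>k\<in>UNIV. cnj (U k i) * U k j) = (if i = j then 1 else 0))"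

fun gate_wf :: "nat \<Rightarrow> gate \<Rightarrow> bool" where
  "gate_wf m (G1 q U) \<longleftrightarrow> q < m \<and> unitary2 U"
| "gate_wf m (CNOT c t) \<longleftrightarrow> c < m \<and> t < m \<and> c \<noteq> t"
| "gate_wf m (Fanout y ts) \<longleftrightarrow> y < m \<and> (\<forall>t\<in>set ts. t < m) \<and> ts \<noteq> [] \<and>
      distinct ts \<and> y \<notin> set ts"

definition circuit_wf :: "nat \<Rightarrow> gate list \<Rightarrow> bool" where
  "circuit_wf m gs \<longleftrightarrow> (\<forall>g\<in>set gs. gate_wf m g)"

fun apply_gate :: "gate \<Rightarrow> state \<Rightarrow> state" where
  "apply_gate (G1 q U) \<psi> = (\<lambda>b. \<Sum>v\<in>UNIV. U (b q) v * \<psi> (b(q := v)))"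
| "apply_gate (CNOT c t) \<psi> = (\<lambda>b. \<psi> (b(t := (b t \<noteq> b c))))"
| "apply_gate (Fanout y ts) \<psi> = (\<lambda>b. \<psi> (\<lambda>i. if i \<in> set ts then b i \<noteq> b y else b i))"

definition apply_circuit :: "gate list \<Rightarrow> state \<Rightarrow> state" where
  "apply_circuit gs \<psi> = fold apply_gate gs \<psi>"

definition ket :: "(nat \<Rightarrow> bool) \<Rightarrow> state" where
  "ket b = (\<lambda>b'. if b' = b then 1 else 0)"

definition circuit_size :: "gate list \<Rightarrow> nat" where
  "circuit_size gs = (\<Sum>g\<leftarrow>gs. length (gate_wires g))"

text \<open>Depth: each wire carries the depth of the last gate on it (0 initially);
  a gate has depth 1 + max depth of its wires; circuit depth is the max gate depth.\<close>
definition layer_step :: "(nat \<Rightarrow> nat) \<times> nat \<Rightarrow> gate \<Rightarrow> (nat \<Rightarrow> nat) \<times> nat" where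
  "layer_step s g = (let dw = fst s; W = set (gate_wires g); d = Suc (Max (dw ` W))
                     in (\<lambda>i. if i \<in> W then d else dw i, max (snd s) d))"

definition circuit_depth :: "gate list \<Rightarrow> nat" where
  "circuit_depth gs = snd (foldl layer_step (\<lambda>_. 0, 0) gs)"

definition OR_fun :: "nat \<Rightarrow> (nat \<Rightarrow> bool) \<Rightarrow> bool" where
  "OR_fun n x \<longleftrightarrow> (\<exists>j<n. x j)"

definition layout :: "nat \<Rightarrow> (nat \<Rightarrow> bool) \<Rightarrow> bool \<Rightarrow> nat \<Rightarrow> bool" where
  "layout n x z = (\<lambda>i. if i < n then x i else if i = n then z else False)"

text \<open>Exact implementation of OR_n with clean ancillas: on every basis input
  |x>|z>|0..0> the circuit outputs |x>|z xor OR_n(x)>|0..0>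
  (by linearity this determines the action on the whole input subspace).\<close>
definition implements_OR :: "nat \<Rightarrow> nat \<Rightarrow> gate list \<Rightarrow> bool" where
  "implements_OR n m gs \<longleftrightarrow> n + 1 \<le> m \<and> circuit_wf m gs \<and>
     (\<forall>x z. apply_circuit gs (ket (layout n x z)) = ket (layout n x (z \<noteq> OR_fun n x)))"

end

theory Submission
  imports Defs
begin

text \<open>
  Apply a Hadamard gate to the work qubit \<open>a\<close> (wire \<open>n + 1\<close>) and, in one fan-out layer, copy \<open>a\<close>
  to one phase wire for each subset \<open>s \<subseteq> {0..<n}\<close> and every input bit \<open>x_i\<close> to one wire for each
  \<open>s\<close>. For \<open>s \<noteq> \<emptyset>\<close>, a fan-out from the phase wire of \<open>s\<close> to the copies of the \<open>x_i\<close> with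
  \<open>i \<in> s\<close>, conjugated by Hadamards, is a parity gate; these act on disjoint wires, so after three
  more layers the phase wire of \<open>s\<close> holds \<open>a \<oplus> \<langle>s, x\<rangle>\<close>. Applying the phase \<open>e^{i\<pi>/2^n}\<close> to
  every phase wire and uncomputing multiplies \<open>|a\<rangle>\<close> by \<open>e^{i\<pi>k_a/2^n}\<close>, where \<open>k_a\<close> counts
  the \<open>s\<close> with \<open>a \<oplus> \<langle>s, x\<rangle> = 1\<close>. For \<open>x \<noteq> 0\<close>, \<open>k_0 = k_1 = 2^(n-1)\<close> gives a global
  phase; for \<open>x = 0\<close>, \<open>k_0 = 0\<close> and \<open>k_1 = 2^n\<close> give a relative sign, which the closing
  Hadamard turns into a NOT. So \<open>a\<close> ends up holding \<open>\<not> OR_n(x)\<close>; it is copied into the target,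
  the target is negated, and the same circuit with the conjugate phase resets \<open>a\<close>. This takes
  24 layers and \<open>O(n 2^n)\<close> wires.
\<close>

section \<open>Circuit algebra\<close>

lemma apply_circuit_Nil [simp]: "apply_circuit [] \<psi> = \<psi>"
  by (simp add: apply_circuit_def)

lemma apply_circuit_Cons [simp]: "apply_circuit (g # gs) \<psi> = apply_circuit gs (apply_gate g \<psi>)"
  by (simp add: apply_circuit_def)

lemma apply_circuit_append: "apply_circuit (xs @ ys) \<psi> = apply_circuit ys (apply_circuit xs \<psi>)"
  by (simp add: apply_circuit_def)

lemma apply_gate_linear:
  "apply_gate g (\<lambda>b. c * \<psi> b + d * \<chi> b) = (\<lambda>b. c * apply_gate g \<psi> b + d * apply_gate g \<chi> b)"
  by (cases g) (auto simp: algebra_simps sum.distrib sum_distrib_left intro!: ext sum.cong)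

lemma apply_gate_scale: "apply_gate g (\<lambda>b. c * \<psi> b) = (\<lambda>b. c * apply_gate g \<psi> b)"
  by (cases g) (auto simp: algebra_simps sum_distrib_left intro!: ext sum.cong)

lemma apply_circuit_linear:
  "apply_circuit gs (\<lambda>b. c * \<psi> b + d * \<chi> b) = (\<lambda>b. c * apply_circuit gs \<psi> b + d * apply_circuit gs \<chi> b)"
  by (induction gs arbitrary: \<psi> \<chi>) (auto simp: apply_gate_linear)

lemma apply_circuit_scale: "apply_circuit gs (\<lambda>b. c * \<psi> b) = (\<lambda>b. c * apply_circuit gs \<psi> b)"
  by (induction gs arbitrary: \<psi>) (auto simp: apply_gate_scale)

definition circuit_wires :: "gate list \<Rightarrow> nat list" where
  "circuit_wires gs = concat (map gate_wires gs)"

lemma circuit_wires_Nil [simp]: "circuit_wires [] = []"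
  and circuit_wires_Cons [simp]: "circuit_wires (g # gs) = gate_wires g @ circuit_wires gs"
  and circuit_wires_append [simp]: "circuit_wires (xs @ ys) = circuit_wires xs @ circuit_wires ys"
  by (simp_all add: circuit_wires_def)

lemma apply_gate_commute:
  assumes "set (gate_wires g) \<inter> set (gate_wires h) = {}"
  shows "apply_gate g (apply_gate h \<psi>) = apply_gate h (apply_gate g \<psi>)"
proof (cases g)
  case (G1 q U)
  show ?thesis
  proof (cases h)
    case (G1 r V)
    with \<open>g = _\<close> assms have "q \<noteq> r" by auto
    with G1 \<open>g = _\<close> show ?thesis
      by (auto simp: sum_distrib_left fun_upd_twist mult.left_commute intro!: ext sum.swap[THEN trans])
  next
    case (CNOT c t)
    with \<open>g = _\<close> assms show ?thesis by (auto simp: fun_upd_twist intro!: ext sum.cong)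
  next
    case (Fanout y ts)
    with \<open>g = _\<close> assms show ?thesis
      by (auto intro!: ext sum.cong arg_cong[where f=\<psi>] split: if_splits)
  qed
next
  case (CNOT c t)
  with assms show ?thesis
    by (cases h) (auto simp: fun_upd_twist intro!: ext sum.cong arg_cong[where f=\<psi>] split: if_splits)
next
  case (Fanout y ts)
  with assms show ?thesis
    by (cases h) (auto intro!: ext sum.cong arg_cong[where f=\<psi>] split: if_splits)
qed

lemma apply_circuit_gate_commute:
  assumes "set (gate_wires g) \<inter> set (circuit_wires ys) = {}"
  shows "apply_circuit ys (apply_gate g \<psi>) = apply_gate g (apply_circuit ys \<psi>)"
  using assms
proof (induction ys arbitrary: \<psi>)
  case (Cons h ys)
  then have "apply_gate h (apply_gate g \<psi>) = apply_gate g (apply_gate h \<psi>)"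
    by (intro apply_gate_commute) auto
  moreover have "apply_circuit ys (apply_gate g (apply_gate h \<psi>)) =
      apply_gate g (apply_circuit ys (apply_gate h \<psi>))"
    using Cons by (simp add: Int_Un_distrib)
  ultimately show ?case by simp
qed simp

lemma apply_circuit_swap:
  assumes "set (circuit_wires xs) \<inter> set (circuit_wires ys) = {}"
  shows "apply_circuit (xs @ ys) \<psi> = apply_circuit (ys @ xs) \<psi>"
  using assms
proof (induction xs arbitrary: \<psi>)
  case (Cons g xs)
  have "set (circuit_wires xs) \<inter> set (circuit_wires ys) = {}"
    using Cons.prems by auto
  then have "apply_circuit ((g # xs) @ ys) \<psi> = apply_circuit xs (apply_circuit ys (apply_gate g \<psi>))"
    using Cons.IH by (simp add: apply_circuit_append)
  also have "\<dots> = apply_circuit xs (apply_gate g (apply_circuit ys \<psi>))"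
    using Cons.prems by (subst apply_circuit_gate_commute) auto
  also have "\<dots> = apply_circuit (ys @ g # xs) \<psi>"
    by (simp add: apply_circuit_append)
  finally show ?case .
qed simp

lemma apply_circuit_swap_middle:
  assumes "set (circuit_wires ys) \<inter> set (circuit_wires zs) = {}"
  shows "apply_circuit (xs @ ys @ zs @ ws) \<psi> = apply_circuit (xs @ zs @ ys @ ws) \<psi>"
  using apply_circuit_swap[OF assms]
  by (simp add: apply_circuit_append append_assoc[symmetric] del: append_assoc)

section \<open>Elementary gates\<close>

definition inv_sqrt2 :: complex where
  "inv_sqrt2 = complex_of_real (1 / sqrt 2)"

lemma inv_sqrt2_sq: "inv_sqrt2 * inv_sqrt2 = 1 / 2"
  and inv_sqrt2_sq_left: "inv_sqrt2 * (inv_sqrt2 * z) = z / 2"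
  and cnj_inv_sqrt2: "cnj inv_sqrt2 = inv_sqrt2"
  by (simp_all add: inv_sqrt2_def mult.assoc[symmetric] flip: of_real_mult)

definition hadamard :: "bool \<Rightarrow> bool \<Rightarrow> complex" where
  "hadamard u v = (if u \<and> v then - inv_sqrt2 else inv_sqrt2)"

definition hadamard_gate :: "nat \<Rightarrow> gate" where
  "hadamard_gate q = G1 q hadamard"

definition phase_shift :: "real \<Rightarrow> bool \<Rightarrow> bool \<Rightarrow> complex" where
  "phase_shift \<phi> u v = (if u = v then (if u then cis \<phi> else 1) else 0)"

definition pauli_x :: "bool \<Rightarrow> bool \<Rightarrow> complex" where
  "pauli_x u v = (if u \<noteq> v then 1 else 0)"

lemma unitary2_hadamard: "unitary2 hadamard"
  by (auto simp: unitary2_def UNIV_bool hadamard_def cnj_inv_sqrt2 inv_sqrt2_sq)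

lemma unitary2_phase_shift: "unitary2 (phase_shift \<phi>)"
  by (auto simp: unitary2_def UNIV_bool phase_shift_def cis_cnj cis_mult)

lemma unitary2_pauli_x: "unitary2 pauli_x"
  by (auto simp: unitary2_def UNIV_bool pauli_x_def)

lemma apply_G1_ket:
  "apply_gate (G1 q U) (ket c) =
     (\<lambda>b. U False (c q) * ket (c(q := False)) b + U True (c q) * ket (c(q := True)) b)"
  by (rule ext, cases "c q") (auto simp: ket_def UNIV_bool fun_eq_iff)

lemma apply_CNOT_ket: "c \<noteq> t \<Longrightarrow> apply_gate (CNOT c t) (ket b) = ket (b(t := b t \<noteq> b c))"
  by (auto simp: ket_def fun_eq_iff)

lemma apply_pauli_x_ket: "apply_gate (G1 q pauli_x) (ket b) = ket (b(q := \<not> b q))"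
  by (cases "b q") (auto simp: apply_G1_ket pauli_x_def simp del: apply_gate.simps)

lemma apply_phase_shift:
  "apply_gate (G1 q (phase_shift \<phi>)) \<psi> = (\<lambda>b. (if b q then cis \<phi> else 1) * \<psi> b)"
proof (rule ext)
  fix b :: "nat \<Rightarrow> bool"
  have "b(q := b q) = b" by simp
  then show "apply_gate (G1 q (phase_shift \<phi>)) \<psi> b = (if b q then cis \<phi> else 1) * \<psi> b"
    by (cases "b q") (simp_all add: UNIV_bool phase_shift_def)
qed

lemma controlled_z:
  assumes "t \<noteq> y"
  shows "apply_circuit [hadamard_gate t, CNOT y t, hadamard_gate t] \<psi> =
           (\<lambda>b. (if b y \<and> b t then -1 else 1) * \<psi> b)"
proof (rule ext)
  fix b :: "nat \<Rightarrow> bool"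
  have "b(t := b t) = b" by simp
  then show "apply_circuit [hadamard_gate t, CNOT y t, hadamard_gate t] \<psi> b =
      (if b y \<and> b t then -1 else 1) * \<psi> b"
    using assms by (cases "b t"; cases "b y")
      (simp_all add: UNIV_bool hadamard_gate_def hadamard_def inv_sqrt2_sq inv_sqrt2_sq_left ring_distribs)
qed

lemma hadamard_conj_controlled_sign:
  assumes P: "\<And>b v. P (b(y := v)) = P b"
  shows "apply_gate (hadamard_gate y)
           (\<lambda>b. (if b y \<and> P b then -1 else 1) * apply_gate (hadamard_gate y) \<psi> b) =
         (\<lambda>b. \<psi> (b(y := b y \<noteq> P b)))"
proof (rule ext)
  fix b :: "nat \<Rightarrow> bool"
  have "b(y := b y) = b" by simp
  then show "apply_gate (hadamard_gate y)
      (\<lambda>b. (if b y \<and> P b then -1 else 1) * apply_gate (hadamard_gate y) \<psi> b) b =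
      \<psi> (b(y := b y \<noteq> P b))"
    by (cases "b y"; cases "P b")
      (simp_all add: UNIV_bool hadamard_gate_def hadamard_def inv_sqrt2_sq inv_sqrt2_sq_left ring_distribs P)
qed

section \<open>Parity gates from fan-out\<close>

fun parity :: "(nat \<Rightarrow> bool) \<Rightarrow> nat list \<Rightarrow> bool" where
  "parity b [] = False"
| "parity b (t # T) = (b t \<noteq> parity b T)"

lemma parity_cong: "(\<And>t. t \<in> set T \<Longrightarrow> b t = b' t) \<Longrightarrow> parity b T = parity b' T"
  by (induction T) auto

lemma parity_map: "parity b (map f T) = parity (b \<circ> f) T"
  by (induction T) auto

lemma parity_append: "parity b (S @ T) = (parity b S \<noteq> parity b T)"
  by (induction S) auto

lemma circuit_wires_map_hadamard [simp]: "circuit_wires (map hadamard_gate T) = T"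
  by (induction T) (simp_all add: hadamard_gate_def)

lemma apply_Fanout_Cons:
  assumes "t \<notin> set T" "y \<notin> set T" "t \<noteq> y"
  shows "apply_gate (Fanout y (t # T)) \<psi> = apply_gate (CNOT y t) (apply_gate (Fanout y T) \<psi>)"
  using assms by (auto intro!: ext arg_cong[where f=\<psi>])

text \<open>With Hadamards on its targets, a fan-out becomes a product of controlled-Z gates.\<close>

lemma fanout_hadamard_targets:
  assumes "distinct (y # T)"
  shows "apply_circuit (map hadamard_gate T @ [Fanout y T] @ map hadamard_gate T) \<psi> =
           (\<lambda>b. (if b y \<and> parity b T then -1 else 1) * \<psi> b)"
  using assms
proof (induction T arbitrary: \<psi>)
  case (Cons t T)
  let ?H = "map hadamard_gate T" and ?h = "hadamard_gate t"
  have d: "t \<notin> set T" "y \<notin> set T" "t \<noteq> y" "distinct (y # T)"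
    using Cons.prems by auto
  have "apply_circuit (map hadamard_gate (t # T) @ [Fanout y (t # T)] @ map hadamard_gate (t # T)) \<psi> =
      apply_circuit ([] @ [?h] @ (?H @ [Fanout y T]) @ ([CNOT y t] @ [?h] @ ?H)) \<psi>"
    by (simp only: list.map append.simps append_assoc apply_circuit_append apply_circuit_Cons
        apply_circuit_Nil apply_Fanout_Cons[OF d(1-3)])
  also have "\<dots> = apply_circuit ([] @ (?H @ [Fanout y T]) @ [?h] @ ([CNOT y t] @ [?h] @ ?H)) \<psi>"
    by (rule apply_circuit_swap_middle) (use d in \<open>auto simp: hadamard_gate_def\<close>)
  also have "\<dots> = apply_circuit ((?H @ [Fanout y T]) @ [?h, CNOT y t, ?h] @ ?H @ []) \<psi>"
    by simp
  also have "\<dots> = apply_circuit ((?H @ [Fanout y T]) @ ?H @ [?h, CNOT y t, ?h] @ []) \<psi>"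
    by (rule apply_circuit_swap_middle) (use d in \<open>auto simp: hadamard_gate_def\<close>)
  also have "\<dots> = apply_circuit [?h, CNOT y t, ?h] (apply_circuit (?H @ [Fanout y T] @ ?H) \<psi>)"
    by (simp add: apply_circuit_append)
  also have "\<dots> = (\<lambda>b. (if b y \<and> b t then -1 else 1) * ((if b y \<and> parity b T then -1 else 1) * \<psi> b))"
    by (simp only: Cons.IH[OF d(4)] controlled_z[OF d(3)])
  also have "\<dots> = (\<lambda>b. (if b y \<and> parity b (t # T) then -1 else 1) * \<psi> b)"
    by (auto intro!: ext)
  finally show ?case .
qed simp

lemma parity_gate:
  assumes "distinct (y # T)"
  shows "apply_circuit (map hadamard_gate (y # T) @ [Fanout y T] @ map hadamard_gate (y # T)) \<psi> =
           (\<lambda>b. \<psi> (b(y := b y \<noteq> parity b T)))"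
proof -
  let ?H = "map hadamard_gate T" and ?h = "hadamard_gate y"
  have "apply_circuit (map hadamard_gate (y # T) @ [Fanout y T] @ map hadamard_gate (y # T)) \<psi> =
      apply_circuit (([?h] @ ?H @ [Fanout y T]) @ [?h] @ ?H @ []) \<psi>"
    by simp
  also have "\<dots> = apply_circuit (([?h] @ ?H @ [Fanout y T]) @ ?H @ [?h] @ []) \<psi>"
    by (rule apply_circuit_swap_middle) (use assms in \<open>auto simp: hadamard_gate_def\<close>)
  also have "\<dots> = apply_gate ?h (\<lambda>b. (if b y \<and> parity b T then -1 else 1) * apply_gate ?h \<psi> b)"
    using fanout_hadamard_targets[OF assms] by (simp add: apply_circuit_append)
  also have "\<dots> = (\<lambda>b. \<psi> (b(y := b y \<noteq> parity b T)))"
    by (rule hadamard_conj_controlled_sign, rule parity_cong) (use assms in auto)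
  finally show ?thesis .
qed

section \<open>Layers of fan-out and parity gates on disjoint wires\<close>

type_synonym layer = "(nat \<times> nat list) list"

definition layer_wires :: "layer \<Rightarrow> nat list" where
  "layer_wires L = concat (map (\<lambda>(y, T). y # T) L)"

lemma layer_wires_Nil [simp]: "layer_wires [] = []"
  and layer_wires_Cons [simp]: "layer_wires ((y, T) # L) = y # T @ layer_wires L"
  by (simp_all add: layer_wires_def)

lemma set_layer_wires: "set (layer_wires L) = (\<Union>(y, T)\<in>set L. insert y (set T))"
  by (auto simp: layer_wires_def)

definition fanout_layer :: "layer \<Rightarrow> gate list" where
  "fanout_layer L = map (\<lambda>(y, T). Fanout y T) L"

definition hadamard_layer :: "layer \<Rightarrow> gate list" where
  "hadamard_layer L = map hadamard_gate (layer_wires L)"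

definition parity_circuit :: "layer \<Rightarrow> gate list" where
  "parity_circuit L = hadamard_layer L @ fanout_layer L @ hadamard_layer L"

lemma circuit_wires_fanout_layer [simp]: "circuit_wires (fanout_layer L) = layer_wires L"
  by (induction L) (auto simp: fanout_layer_def)

lemma circuit_wires_hadamard_layer [simp]: "circuit_wires (hadamard_layer L) = layer_wires L"
  by (simp add: hadamard_layer_def)

fun fanout_update :: "layer \<Rightarrow> (nat \<Rightarrow> bool) \<Rightarrow> nat \<Rightarrow> bool" where
  "fanout_update [] b = b"
| "fanout_update ((y, T) # L) b =
     (let b' = fanout_update L b in (\<lambda>i. if i \<in> set T then b' i \<noteq> b' y else b' i))"

fun parity_update :: "layer \<Rightarrow> (nat \<Rightarrow> bool) \<Rightarrow> nat \<Rightarrow> bool" where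
  "parity_update [] b = b"
| "parity_update ((y, T) # L) b = (let b' = parity_update L b in b'(y := b' y \<noteq> parity b' T))"

lemma apply_fanout_layer: "apply_circuit (fanout_layer L) \<psi> = \<psi> \<circ> fanout_update L"
  by (induction L arbitrary: \<psi>) (auto simp: fanout_layer_def o_def Let_def)

lemma apply_parity_circuit:
  assumes "distinct (layer_wires L)"
  shows "apply_circuit (parity_circuit L) \<psi> = \<psi> \<circ> parity_update L"
  using assms
proof (induction L arbitrary: \<psi>)
  case Nil
  then show ?case by (simp add: parity_circuit_def hadamard_layer_def fanout_layer_def o_def)
next
  case (Cons p L)
  obtain y T where p: "p = (y, T)" by (cases p)
  let ?B = "map hadamard_gate (y # T)" and ?F = "[Fanout y T]"
  let ?R = "hadamard_layer L" and ?FR = "fanout_layer L"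
  have d: "distinct (y # T)" "distinct (layer_wires L)" "set (y # T) \<inter> set (layer_wires L) = {}"
    using Cons.prems p by auto
  have "apply_circuit (parity_circuit (p # L)) \<psi> = apply_circuit (?B @ ?R @ ?F @ (?FR @ ?B @ ?R)) \<psi>"
    by (simp add: p parity_circuit_def hadamard_layer_def fanout_layer_def)
  also have "\<dots> = apply_circuit (?B @ ?F @ ?R @ (?FR @ ?B @ ?R)) \<psi>"
    by (rule apply_circuit_swap_middle) (use d(3) in \<open>auto simp: hadamard_gate_def\<close>)
  also have "\<dots> = apply_circuit ((?B @ ?F) @ (?R @ ?FR) @ ?B @ ?R) \<psi>"
    by simp
  also have "\<dots> = apply_circuit ((?B @ ?F) @ ?B @ (?R @ ?FR) @ ?R) \<psi>"
    by (rule apply_circuit_swap_middle) (use d(3) in \<open>auto simp: hadamard_gate_def\<close>)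
  also have "\<dots> = apply_circuit (parity_circuit L) (apply_circuit (?B @ ?F @ ?B) \<psi>)"
    by (simp add: apply_circuit_append parity_circuit_def)
  also have "\<dots> = \<psi> \<circ> parity_update (p # L)"
    using parity_gate[OF d(1)] Cons.IH[OF d(2)] by (simp add: p o_def Let_def)
  finally show ?case .
qed

lemma layer_control_notin_targets:
  "distinct (layer_wires L) \<Longrightarrow> (y, T) \<in> set L \<Longrightarrow> (y', T') \<in> set L \<Longrightarrow> y' \<notin> set T"
  by (induction L) (force simp: set_layer_wires)+

lemma fanout_update_other: "(\<forall>(y, T)\<in>set L. i \<notin> set T) \<Longrightarrow> fanout_update L b i = b i"
  by (induction L b rule: fanout_update.induct) (auto simp: Let_def)

lemma fanout_update_target:
  "distinct (layer_wires L) \<Longrightarrow> (y, T) \<in> set L \<Longrightarrow> i \<in> set T \<Longrightarrow>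
     fanout_update L b i = (b i \<noteq> b y)"
proof (induction L b rule: fanout_update.induct)
  case (2 y' T' L b)
  show ?case
  proof (cases "(y, T) = (y', T')")
    case True
    then have "\<forall>(y, T)\<in>set L. i \<notin> set T" "\<forall>(_, T)\<in>set L. y \<notin> set T"
      using "2.prems"(1,3) by (force simp: set_layer_wires)+
    then show ?thesis using True "2.prems"(3) by (auto simp: Let_def fanout_update_other)
  next
    case False
    then have "(y, T) \<in> set L" using "2.prems"(2) by auto
    moreover have "i \<notin> set T'" using "2.prems"(1,3) \<open>(y, T) \<in> set L\<close> by (force simp: set_layer_wires)
    ultimately show ?thesis using 2 by (auto simp: Let_def)
  qed
qed simp

lemma fanout_update_involution:
  assumes "distinct (layer_wires L)"
  shows "fanout_update L (fanout_update L b) = b"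
proof (rule ext)
  fix i
  show "fanout_update L (fanout_update L b) i = b i"
  proof (cases "\<exists>(y, T)\<in>set L. i \<in> set T")
    case True
    then obtain y T where yT: "(y, T) \<in> set L" "i \<in> set T" by force
    have "fanout_update L b y = b y"
      using layer_control_notin_targets[OF assms _ yT(1)] by (intro fanout_update_other) auto
    then show ?thesis
      using fanout_update_target[OF assms yT, of "fanout_update L b"] fanout_update_target[OF assms yT, of b]
      by auto
  next
    case False
    then have "\<forall>(y, T)\<in>set L. i \<notin> set T" by auto
    from fanout_update_other[OF this] show ?thesis by simp
  qed
qed

lemma parity_update_other: "i \<notin> fst ` set L \<Longrightarrow> parity_update L b i = b i"
  by (induction L b rule: parity_update.induct) (auto simp: Let_def)

lemma parity_update_control:
  "distinct (layer_wires L) \<Longrightarrow> (y, T) \<in> set L \<Longrightarrow> parity_update L b y = (b y \<noteq> parity b T)"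
proof (induction L b rule: parity_update.induct)
  case (2 y' T' L b)
  show ?case
  proof (cases "(y, T) = (y', T')")
    case True
    have "y \<notin> fst ` set L" "\<forall>t\<in>set T. t \<notin> fst ` set L"
      using "2.prems"(1) True by (force simp: set_layer_wires)+
    then have "parity (parity_update L b) T = parity b T"
      by (metis parity_cong parity_update_other)
    then show ?thesis using True \<open>y \<notin> fst ` set L\<close> by (auto simp: Let_def parity_update_other)
  next
    case False
    then have "(y, T) \<in> set L" using "2.prems"(2) by auto
    moreover have "y \<noteq> y'" using "2.prems"(1) \<open>(y, T) \<in> set L\<close> by (force simp: set_layer_wires)
    ultimately show ?thesis using 2 by (auto simp: Let_def)
  qed
qed simp

lemma parity_update_involution:
  assumes "distinct (layer_wires L)"
  shows "parity_update L (parity_update L b) = b"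
proof (rule ext)
  fix i
  show "parity_update L (parity_update L b) i = b i"
  proof (cases "i \<in> fst ` set L")
    case True
    then obtain T where iT: "(i, T) \<in> set L" by force
    have "\<forall>t\<in>set T. t \<notin> fst ` set L"
      using layer_control_notin_targets[OF assms iT] by force
    then have "parity (parity_update L b) T = parity b T"
      by (metis parity_cong parity_update_other)
    then show ?thesis
      using parity_update_control[OF assms iT, of "parity_update L b"] parity_update_control[OF assms iT, of b]
      by auto
  next
    case False
    then show ?thesis by (simp add: parity_update_other)
  qed
qed

lemma ket_comp_involution: "(\<And>b. F (F b) = b) \<Longrightarrow> ket c \<circ> F = ket (F c)"
  unfolding ket_def o_def by (rule ext) metis

lemma apply_fanout_layer_ket:
  "distinct (layer_wires L) \<Longrightarrow> apply_circuit (fanout_layer L) (ket b) = ket (fanout_update L b)"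
  by (simp add: apply_fanout_layer ket_comp_involution fanout_update_involution)

lemma apply_parity_circuit_ket:
  "distinct (layer_wires L) \<Longrightarrow> apply_circuit (parity_circuit L) (ket b) = ket (parity_update L b)"
  by (simp add: apply_parity_circuit ket_comp_involution parity_update_involution)

section \<open>Phase kickback\<close>

definition phase_layer :: "real \<Rightarrow> nat list \<Rightarrow> gate list" where
  "phase_layer \<phi> qs = map (\<lambda>q. G1 q (phase_shift \<phi>)) qs"

definition phase_factor :: "real \<Rightarrow> nat list \<Rightarrow> (nat \<Rightarrow> bool) \<Rightarrow> complex" where
  "phase_factor \<phi> qs b = prod_list (map (\<lambda>q. if b q then cis \<phi> else 1) qs)"

lemma circuit_wires_phase_layer [simp]: "circuit_wires (phase_layer \<phi> qs) = qs"
  by (induction qs) (auto simp: phase_layer_def)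

lemma apply_phase_layer_ket:
  "apply_circuit (phase_layer \<phi> qs) (ket b) = (\<lambda>b'. phase_factor \<phi> qs b * ket b b')"
proof -
  have "apply_circuit (phase_layer \<phi> qs) \<psi> = (\<lambda>b. phase_factor \<phi> qs b * \<psi> b)" for \<psi>
    by (induction qs arbitrary: \<psi>)
      (auto simp: phase_layer_def phase_factor_def apply_phase_shift mult.assoc mult.left_commute
        simp del: apply_gate.simps)
  then show ?thesis by (auto simp: ket_def intro!: ext)
qed

lemma apply_circuit_conj_diagonal:
  assumes "\<And>b. apply_circuit A (ket b) = ket (F b)"
    and "\<And>b. apply_circuit B (ket b) = ket (G b)"
    and "\<And>b. G (F b) = b"
    and "\<And>b. apply_circuit D (ket b) = (\<lambda>b'. d b * ket b b')"
  shows "apply_circuit (A @ D @ B) (ket b) = (\<lambda>b'. d (F b) * ket b b')"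
  by (simp add: apply_circuit_append assms apply_circuit_scale)

lemma hadamard_sandwich:
  assumes "\<And>v. apply_circuit M (ket (c(a := v))) = (\<lambda>b. e v * ket (c(a := v)) b)"
  shows "apply_circuit ([hadamard_gate a] @ M @ [hadamard_gate a]) (ket (c(a := \<alpha>))) =
    (\<lambda>b. (hadamard False \<alpha> * hadamard False False * e False + hadamard True \<alpha> * hadamard False True * e True)
           * ket (c(a := False)) b
       + (hadamard False \<alpha> * hadamard True False * e False + hadamard True \<alpha> * hadamard True True * e True)
           * ket (c(a := True)) b)"
proof -
  have h: "apply_gate (hadamard_gate a) (ket (c(a := v))) =
      (\<lambda>b. hadamard False v * ket (c(a := False)) b + hadamard True v * ket (c(a := True)) b)" for v
    by (simp add: hadamard_gate_def apply_G1_ket del: apply_gate.simps)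
  have "apply_circuit ([hadamard_gate a] @ M @ [hadamard_gate a]) (ket (c(a := \<alpha>))) =
      apply_gate (hadamard_gate a) (apply_circuit M (apply_gate (hadamard_gate a) (ket (c(a := \<alpha>)))))"
    by (simp add: apply_circuit_append del: apply_gate.simps)
  also have "\<dots> = apply_gate (hadamard_gate a)
      (\<lambda>b. (hadamard False \<alpha> * e False) * ket (c(a := False)) b + (hadamard True \<alpha> * e True) * ket (c(a := True)) b)"
    by (simp only: h apply_circuit_linear assms mult.assoc)
  also have "\<dots> = (\<lambda>b. (hadamard False \<alpha> * e False) *
          (hadamard False False * ket (c(a := False)) b + hadamard True False * ket (c(a := True)) b)
       + (hadamard True \<alpha> * e True) *
          (hadamard False True * ket (c(a := False)) b + hadamard True True * ket (c(a := True)) b))"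
    by (simp only: apply_gate_linear h)
  finally show ?thesis
    by (simp add: algebra_simps)
qed

lemma hadamard_sandwich_global_phase:
  assumes "\<And>v. apply_circuit M (ket (c(a := v))) = (\<lambda>b. w * ket (c(a := v)) b)"
  shows "apply_circuit ([hadamard_gate a] @ M @ [hadamard_gate a]) (ket (c(a := \<alpha>))) =
           (\<lambda>b. w * ket (c(a := \<alpha>)) b)"
  unfolding hadamard_sandwich[OF assms]
  by (cases \<alpha>) (auto simp: hadamard_def inv_sqrt2_sq intro!: ext simp flip: distrib_left distrib_right)

lemma hadamard_sandwich_flip:
  assumes "\<And>v. apply_circuit M (ket (c(a := v))) = (\<lambda>b. (if v then -1 else 1) * ket (c(a := v)) b)"
  shows "apply_circuit ([hadamard_gate a] @ M @ [hadamard_gate a]) (ket (c(a := \<alpha>))) =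
           ket (c(a := \<not> \<alpha>))"
  unfolding hadamard_sandwich[OF assms]
  by (cases \<alpha>) (auto simp: hadamard_def inv_sqrt2_sq intro!: ext simp flip: distrib_left distrib_right)

section \<open>Parities of subsets\<close>

text \<open>Subsets of \<open>{0..<n}\<close> are encoded by the numbers \<open>s < 2^n\<close>, via their binary digits.\<close>

definition subset_parity :: "nat \<Rightarrow> (nat \<Rightarrow> bool) \<Rightarrow> nat \<Rightarrow> bool" where
  "subset_parity n x s = parity x (filter (bit s) [0..<n])"

lemma bit_less_power_imp_less: "(s::nat) < 2 ^ n \<Longrightarrow> bit s i \<Longrightarrow> i < n"
  by (metis bit_take_bit_iff take_bit_nat_eq_self_iff)

lemma bit_add_power_below: "(s::nat) < 2 ^ n \<Longrightarrow> i < n \<Longrightarrow> bit (s + 2 ^ n) i = bit s i"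
  by (metis bit_disjunctive_add_iff bit_exp_iff bit_take_bit_iff nat_neq_iff take_bit_nat_eq_self_iff)

lemma bit_add_power_self:
  assumes "(s::nat) < 2 ^ n"
  shows "bit (s + 2 ^ n) n"
proof -
  have "\<forall>k. \<not> bit s k \<or> \<not> bit ((2::nat) ^ n) k"
    using assms by (metis bit_exp_iff bit_less_power_imp_less less_irrefl)
  then show ?thesis by (simp add: bit_disjunctive_add_iff bit_exp_iff)
qed

lemma ex_bit_if_nonzero: "(s::nat) \<noteq> 0 \<Longrightarrow> \<exists>i. bit s i"
  using bit_eq_iff[of s 0] by auto

lemma subset_parity_Suc: "subset_parity (Suc n) x s = (subset_parity n x s \<noteq> (bit s n \<and> x n))"
  by (simp add: subset_parity_def parity_append)

lemma subset_parity_add_power: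
  assumes "s < 2 ^ n"
  shows "subset_parity (Suc n) x s = subset_parity n x s"
    and "subset_parity (Suc n) x (s + 2 ^ n) = (subset_parity n x s \<noteq> x n)"
proof -
  have "filter (bit (s + 2 ^ n)) [0..<n] = filter (bit s) [0..<n]"
    using assms by (intro filter_cong) (auto simp: bit_add_power_below)
  then have "subset_parity n x (s + 2 ^ n) = subset_parity n x s"
    by (simp add: subset_parity_def)
  then show "subset_parity (Suc n) x (s + 2 ^ n) = (subset_parity n x s \<noteq> x n)"
    using assms by (simp add: subset_parity_Suc bit_add_power_self)
  show "subset_parity (Suc n) x s = subset_parity n x s"
    using assms bit_less_power_imp_less by (auto simp: subset_parity_Suc)
qed

text \<open>A nonzero linear form over \<open>GF(2)\<close> takes the value 1 on exactly half of the vectors.\<close>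

lemma length_filter_subset_parity:
  "length (filter (subset_parity n x) [0..<2 ^ n]) = (if \<exists>j<n. x j then 2 ^ (n - 1) else 0)"
proof (induction n)
  case 0
  then show ?case by (simp add: subset_parity_def)
next
  case (Suc n)
  let ?A = "[0..<2 ^ n]" and ?k = "length (filter (subset_parity n x) [0..<2 ^ n])"
  have split: "[0..<2 ^ Suc n] = ?A @ map (\<lambda>s. s + 2 ^ n) ?A"
    using upt_add_eq_append[of 0 "2 ^ n" "2 ^ n"] map_add_upt[of "2 ^ n" "2 ^ n"] by (simp add: mult_2)
  have low: "length (filter (subset_parity (Suc n) x) ?A) = ?k"
    by (rule arg_cong[where f=length], rule filter_cong) (auto simp: subset_parity_add_power)
  have high: "length (filter (subset_parity (Suc n) x) (map (\<lambda>s. s + 2 ^ n) ?A)) =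
      length (filter (\<lambda>s. subset_parity n x s \<noteq> x n) ?A)"
    by (simp add: o_def, rule arg_cong[where f=length], rule filter_cong) (auto simp: subset_parity_add_power)
  have "?k + length (filter (\<lambda>s. \<not> subset_parity n x s) ?A) = 2 ^ n"
    using sum_length_filter_compl[of "subset_parity n x" ?A] by simp
  then have total: "length (filter (subset_parity (Suc n) x) [0..<2 ^ Suc n]) =
      ?k + (if x n then 2 ^ n - ?k else ?k)"
    by (simp only: split filter_append length_append low high) (cases "x n"; simp)
  show ?case
  proof (cases "\<exists>j<n. x j")
    case True
    then have "(2::nat) ^ n = 2 * 2 ^ (n - 1)"
      by (cases n) auto
    then show ?thesis using True total Suc.IH by (auto simp: less_Suc_eq)
  next
    case False
    then show ?thesis using total Suc.IH by (auto simp: less_Suc_eq)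
  qed
qed

section \<open>The OR circuit\<close>

text \<open>Besides the input wires \<open>0..<n\<close> and the target \<open>n\<close>, the circuit uses the work qubit
  \<open>n + 1\<close>, one phase wire per subset \<open>s\<close>, and one copy of every input bit per subset.\<close>

definition phase_wire :: "nat \<Rightarrow> nat \<Rightarrow> nat" where
  "phase_wire n s = n + 2 + s"

definition copy_wire :: "nat \<Rightarrow> nat \<Rightarrow> nat \<Rightarrow> nat" where
  "copy_wire n i s = n + 2 + 2 ^ n + i * 2 ^ n + s"

definition phase_wires :: "nat \<Rightarrow> nat list" where
  "phase_wires n = map (phase_wire n) [0..<2 ^ n]"

definition copy_layer :: "nat \<Rightarrow> layer" where
  "copy_layer n = (Suc n, phase_wires n) # map (\<lambda>i. (i, map (copy_wire n i) [0..<2 ^ n])) [0..<n]"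

definition subset_copies :: "nat \<Rightarrow> nat \<Rightarrow> nat list" where
  "subset_copies n s = map (\<lambda>i. copy_wire n i s) (filter (bit s) [0..<n])"

definition subset_parity_layer :: "nat \<Rightarrow> layer" where
  "subset_parity_layer n = map (\<lambda>s. (phase_wire n s, subset_copies n s)) [1..<2 ^ n]"

definition kickback_layers :: "nat \<Rightarrow> real \<Rightarrow> gate list list" where
  "kickback_layers n \<phi> =
     [[hadamard_gate (Suc n)], fanout_layer (copy_layer n),
      hadamard_layer (subset_parity_layer n), fanout_layer (subset_parity_layer n),
      hadamard_layer (subset_parity_layer n), phase_layer \<phi> (phase_wires n),
      hadamard_layer (subset_parity_layer n), fanout_layer (subset_parity_layer n),
      hadamard_layer (subset_parity_layer n), fanout_layer (copy_layer n), [hadamard_gate (Suc n)]]"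

definition or_angle :: "nat \<Rightarrow> real" where
  "or_angle n = pi / 2 ^ n"

definition or_layers :: "nat \<Rightarrow> gate list list" where
  "or_layers n = kickback_layers n (or_angle n) @ [[CNOT (Suc n) n], [G1 n pauli_x]] @
     kickback_layers n (- or_angle n)"

definition or_circuit :: "nat \<Rightarrow> gate list" where
  "or_circuit n = concat (or_layers n)"

definition or_width :: "nat \<Rightarrow> nat" where
  "or_width n = n + 2 + 2 ^ n + n * 2 ^ n"

lemma copy_wire_eq_iff:
  assumes "s < 2 ^ n" "s' < 2 ^ n"
  shows "copy_wire n i s = copy_wire n i' s' \<longleftrightarrow> i = i' \<and> s = s'"
proof
  assume eq: "copy_wire n i s = copy_wire n i' s'"
  then have "(i * 2 ^ n + s) mod 2 ^ n = (i' * 2 ^ n + s') mod 2 ^ n"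
    by (simp add: copy_wire_def)
  then have "s = s'" using assms by simp
  with eq show "i = i' \<and> s = s'" by (simp add: copy_wire_def)
qed simp

lemma copy_wire_ge: "n + 2 + 2 ^ n \<le> copy_wire n i s"
  by (simp add: copy_wire_def)

lemma copy_wire_less: "i < n \<Longrightarrow> s < 2 ^ n \<Longrightarrow> copy_wire n i s < or_width n"
proof -
  assume "i < n" "s < 2 ^ n"
  then have "i * 2 ^ n + s < (i + 1) * 2 ^ n" by simp
  also have "\<dots> \<le> n * 2 ^ n" using \<open>i < n\<close> by (intro mult_right_mono) auto
  finally show ?thesis by (simp add: copy_wire_def or_width_def)
qed

lemma phase_wire_less: "s < 2 ^ n \<Longrightarrow> phase_wire n s < n + 2 + 2 ^ n"
  by (simp add: phase_wire_def)

lemma distinct_phase_wires: "distinct (phase_wires n)"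
  by (simp add: phase_wires_def distinct_map inj_on_def phase_wire_def)

lemma distinct_concat_map:
  "distinct xs \<Longrightarrow> (\<forall>x\<in>set xs. distinct (f x)) \<Longrightarrow>
   (\<forall>x\<in>set xs. \<forall>y\<in>set xs. x \<noteq> y \<longrightarrow> set (f x) \<inter> set (f y) = {}) \<Longrightarrow> distinct (concat (map f xs))"
  by (induction xs) fastforce+

lemma layer_wires_map: "layer_wires (map (\<lambda>x. (g x, h x)) xs) = concat (map (\<lambda>x. g x # h x) xs)"
  by (simp add: layer_wires_def o_def)

lemma distinct_copy_layer: "distinct (layer_wires (copy_layer n))"
proof -
  define C where "C = concat (map (\<lambda>i. i # map (copy_wire n i) [0..<2 ^ n]) [0..<n])"
  have wires: "layer_wires (copy_layer n) = Suc n # phase_wires n @ C"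
    by (simp add: copy_layer_def layer_wires_map C_def)
  have "distinct C" unfolding C_def
  proof (rule distinct_concat_map)
    show "\<forall>i\<in>set [0..<n]. distinct (i # map (copy_wire n i) [0..<2 ^ n])"
    proof
      fix i assume "i \<in> set [0..<n]"
      then have "copy_wire n i s \<noteq> i" for s
        using copy_wire_ge[of n i s] by auto
      then have "i \<notin> copy_wire n i ` {0..<2 ^ n}"
        by (metis imageE)
      moreover have "inj_on (copy_wire n i) {0..<2 ^ n}"
        by (auto simp: inj_on_def copy_wire_eq_iff)
      ultimately show "distinct (i # map (copy_wire n i) [0..<2 ^ n])"
        by (simp add: distinct_map)
    qed
    show "\<forall>i\<in>set [0..<n]. \<forall>j\<in>set [0..<n]. i \<noteq> j \<longrightarrow>
        set (i # map (copy_wire n i) [0..<2 ^ n]) \<inter> set (j # map (copy_wire n j) [0..<2 ^ n]) = {}"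
    proof (intro ballI impI)
      fix i j assume ij: "i \<in> set [0..<n]" "j \<in> set [0..<n]" "i \<noteq> j"
      have "copy_wire n i s \<noteq> j" "copy_wire n j s \<noteq> i" for s
        using ij copy_wire_ge[of n i s] copy_wire_ge[of n j s] by auto
      moreover have "copy_wire n i s \<noteq> copy_wire n j s'" if "s < 2 ^ n" "s' < 2 ^ n" for s s'
        using that ij by (simp add: copy_wire_eq_iff)
      ultimately show "set (i # map (copy_wire n i) [0..<2 ^ n]) \<inter>
          set (j # map (copy_wire n j) [0..<2 ^ n]) = {}"
        using ij by auto
    qed
  qed simp
  have C_bound: "j < n \<or> n + 2 + 2 ^ n \<le> j" if "j \<in> set C" for j
    using that copy_wire_ge unfolding C_def by auto
  have P_bound: "n + 2 \<le> j \<and> j < n + 2 + 2 ^ n" if "j \<in> set (phase_wires n)" for j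
    using that by (auto simp: phase_wires_def phase_wire_def)
  have "Suc n \<notin> set (phase_wires n)" "Suc n \<notin> set C" "set (phase_wires n) \<inter> set C = {}"
    using C_bound P_bound by fastforce+
  with \<open>distinct C\<close> distinct_phase_wires[of n] show ?thesis
    by (simp add: wires)
qed

lemma distinct_subset_parity_layer: "distinct (layer_wires (subset_parity_layer n))"
  unfolding subset_parity_layer_def layer_wires_map
proof (rule distinct_concat_map)
  show "\<forall>s\<in>set [1..<2 ^ n]. distinct (phase_wire n s # subset_copies n s)"
  proof
    fix s assume s: "s \<in> set [1..<2 ^ n]"
    have "inj_on (\<lambda>i. copy_wire n i s) (set (filter (bit s) [0..<n]))"
      using s by (auto simp: inj_on_def copy_wire_eq_iff)
    moreover have "phase_wire n s \<noteq> copy_wire n i s" for i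
      using s phase_wire_less[of s n] copy_wire_ge[of n i s] by auto
    ultimately show "distinct (phase_wire n s # subset_copies n s)"
      by (auto simp: subset_copies_def distinct_map)
  qed
  show "\<forall>s\<in>set [1..<2 ^ n]. \<forall>s'\<in>set [1..<2 ^ n]. s \<noteq> s' \<longrightarrow>
      set (phase_wire n s # subset_copies n s) \<inter> set (phase_wire n s' # subset_copies n s') = {}"
  proof (intro ballI impI)
    fix s s' assume ss: "s \<in> set [1..<2 ^ n]" "s' \<in> set [1..<2 ^ n]" "s \<noteq> s'"
    have "phase_wire n s \<noteq> copy_wire n i s'" "phase_wire n s' \<noteq> copy_wire n i s" for i
      using ss phase_wire_less[of s n] phase_wire_less[of s' n] copy_wire_ge[of n i s] copy_wire_ge[of n i s']
      by auto
    moreover have "copy_wire n i s \<noteq> copy_wire n i' s'" for i i'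
      using ss by (simp add: copy_wire_eq_iff)
    moreover have "phase_wire n s \<noteq> phase_wire n s'"
      using ss by (simp add: phase_wire_def)
    ultimately show "set (phase_wire n s # subset_copies n s) \<inter> set (phase_wire n s' # subset_copies n s') = {}"
      by (auto simp: subset_copies_def)
  qed
qed simp

lemma apply_kickback_core_ket:
  "apply_circuit (fanout_layer (copy_layer n) @ parity_circuit (subset_parity_layer n) @
      phase_layer \<phi> (phase_wires n) @ parity_circuit (subset_parity_layer n) @ fanout_layer (copy_layer n))
      (ket b) =
    (\<lambda>b'. phase_factor \<phi> (phase_wires n)
             (parity_update (subset_parity_layer n) (fanout_update (copy_layer n) b)) * ket b b')"
proof -
  let ?C = "copy_layer n" and ?P = "subset_parity_layer n"
  have "apply_circuit ((fanout_layer ?C @ parity_circuit ?P) @ phase_layer \<phi> (phase_wires n) @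
      (parity_circuit ?P @ fanout_layer ?C)) (ket b) =
    (\<lambda>b'. phase_factor \<phi> (phase_wires n) (parity_update ?P (fanout_update ?C b)) * ket b b')"
  proof (rule apply_circuit_conj_diagonal)
    fix b
    show "apply_circuit (fanout_layer ?C @ parity_circuit ?P) (ket b) = ket (parity_update ?P (fanout_update ?C b))"
      "apply_circuit (parity_circuit ?P @ fanout_layer ?C) (ket b) = ket (fanout_update ?C (parity_update ?P b))"
      by (simp_all add: apply_circuit_append apply_fanout_layer_ket apply_parity_circuit_ket
          distinct_copy_layer distinct_subset_parity_layer)
    show "fanout_update ?C (parity_update ?P (parity_update ?P (fanout_update ?C b))) = b"
      by (simp add: fanout_update_involution[OF distinct_copy_layer]
          parity_update_involution[OF distinct_subset_parity_layer])
  qed (rule apply_phase_layer_ket)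
  then show ?thesis by simp
qed

lemma concat_kickback_layers:
  "concat (kickback_layers n \<phi>) = [hadamard_gate (Suc n)] @
     (fanout_layer (copy_layer n) @ parity_circuit (subset_parity_layer n) @
      phase_layer \<phi> (phase_wires n) @ parity_circuit (subset_parity_layer n) @ fanout_layer (copy_layer n)) @
     [hadamard_gate (Suc n)]"
  by (simp add: kickback_layers_def parity_circuit_def)

lemma phase_wire_after_copy:
  assumes "s < 2 ^ n"
  shows "parity_update (subset_parity_layer n) (fanout_update (copy_layer n) ((layout n x z)(Suc n := v)))
           (phase_wire n s) = (v \<noteq> subset_parity n x s)"
proof -
  let ?c = "(layout n x z)(Suc n := v)"
  let ?b = "fanout_update (copy_layer n) ?c"
  have phase: "?b (phase_wire n s) = v"
  proof -
    have "(Suc n, phase_wires n) \<in> set (copy_layer n)" "phase_wire n s \<in> set (phase_wires n)"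
      using assms by (auto simp: copy_layer_def phase_wires_def)
    from fanout_update_target[OF distinct_copy_layer this] show ?thesis
      by (simp add: phase_wire_def layout_def)
  qed
  have copy: "?b (copy_wire n i s) = x i" if "i < n" for i
  proof -
    have "(i, map (copy_wire n i) [0..<2 ^ n]) \<in> set (copy_layer n)" "copy_wire n i s \<in> set (map (copy_wire n i) [0..<2 ^ n])"
      using that assms by (auto simp: copy_layer_def)
    from fanout_update_target[OF distinct_copy_layer this] show ?thesis
      using that copy_wire_ge[of n i s] by (simp add: layout_def)
  qed
  show ?thesis
  proof (cases "s = 0")
    case True
    have "phase_wire n 0 \<notin> fst ` set (subset_parity_layer n)"
      by (auto simp: subset_parity_layer_def phase_wire_def)
    then show ?thesis
      using True phase by (simp add: parity_update_other subset_parity_def)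
  next
    case False
    then have "(phase_wire n s, subset_copies n s) \<in> set (subset_parity_layer n)"
      using assms by (auto simp: subset_parity_layer_def)
    from parity_update_control[OF distinct_subset_parity_layer this]
    have "parity_update (subset_parity_layer n) ?b (phase_wire n s) = (v \<noteq> parity ?b (subset_copies n s))"
      by (simp add: phase)
    moreover have "parity ?b (subset_copies n s) = subset_parity n x s"
      unfolding subset_copies_def subset_parity_def parity_map by (rule parity_cong) (simp add: copy)
    ultimately show ?thesis by simp
  qed
qed

lemma prod_list_map_if: "prod_list (map (\<lambda>s. if P s then w else 1) xs) = w ^ length (filter P xs)"
  by (induction xs) auto

lemma phase_factor_after_copy:
  "phase_factor \<phi> (phase_wires n)
     (parity_update (subset_parity_layer n) (fanout_update (copy_layer n) ((layout n x z)(Suc n := v)))) =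
   cis \<phi> ^ length (filter (\<lambda>s. v \<noteq> subset_parity n x s) [0..<2 ^ n])"
proof -
  have "phase_factor \<phi> (phase_wires n)
      (parity_update (subset_parity_layer n) (fanout_update (copy_layer n) ((layout n x z)(Suc n := v)))) =
      prod_list (map (\<lambda>s. if v \<noteq> subset_parity n x s then cis \<phi> else 1) [0..<2 ^ n])"
    unfolding phase_factor_def phase_wires_def map_map o_def
    by (rule arg_cong[where f=prod_list], rule map_cong) (auto simp: phase_wire_after_copy)
  then show ?thesis by (simp add: prod_list_map_if)
qed

lemma apply_kickback_nonzero:
  assumes "\<exists>j<n. x j"
  shows "apply_circuit (concat (kickback_layers n \<phi>)) (ket ((layout n x z)(Suc n := \<alpha>))) =
           (\<lambda>b. cis \<phi> ^ 2 ^ (n - 1) * ket ((layout n x z)(Suc n := \<alpha>)) b)"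
proof -
  have odd: "length (filter (subset_parity n x) [0..<2 ^ n]) = 2 ^ (n - 1)"
    using length_filter_subset_parity[of n x] assms by simp
  moreover have "(2::nat) ^ n = 2 * 2 ^ (n - 1)"
    using assms by (cases n) auto
  ultimately have even: "length (filter (\<lambda>s. \<not> subset_parity n x s) [0..<2 ^ n]) = 2 ^ (n - 1)"
    using sum_length_filter_compl[of "subset_parity n x" "[0..<2 ^ n]"] by simp
  have "length (filter (\<lambda>s. v \<noteq> subset_parity n x s) [0..<2 ^ n]) = 2 ^ (n - 1)" for v
    using odd even by (cases v) simp_all
  then show ?thesis
    unfolding concat_kickback_layers
    by (intro hadamard_sandwich_global_phase) (simp add: apply_kickback_core_ket phase_factor_after_copy)
qed

lemma apply_kickback_zero:
  assumes "\<not> (\<exists>j<n. x j)" and "cis \<phi> ^ 2 ^ n = -1"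
  shows "apply_circuit (concat (kickback_layers n \<phi>)) (ket ((layout n x z)(Suc n := \<alpha>))) =
           ket ((layout n x z)(Suc n := \<not> \<alpha>))"
proof -
  have odd: "length (filter (subset_parity n x) [0..<2 ^ n]) = 0"
    using length_filter_subset_parity[of n x] assms by simp
  then have even: "length (filter (\<lambda>s. \<not> subset_parity n x s) [0..<2 ^ n]) = 2 ^ n"
    using sum_length_filter_compl[of "subset_parity n x" "[0..<2 ^ n]"] by simp
  show ?thesis
    unfolding concat_kickback_layers
    by (rule hadamard_sandwich_flip) (simp add: apply_kickback_core_ket phase_factor_after_copy odd even assms(2))
qed

lemma cis_or_angle_power: "cis (or_angle n) ^ 2 ^ n = -1" "cis (- or_angle n) ^ 2 ^ n = -1"
  by (simp_all add: DeMoivre or_angle_def complex_eq_iff)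

lemma layout_update_target: "((layout n x z)(Suc n := v))(n := w) = (layout n x w)(Suc n := v)"
  and layout_update_work: "(layout n x z)(Suc n := False) = layout n x z"
  and layout_target: "((layout n x z)(Suc n := v)) n = z"
  and layout_work: "((layout n x z)(Suc n := v)) (Suc n) = v"
  and layout_at_target: "layout n x z n = z"
  by (auto simp: layout_def fun_eq_iff)

lemma apply_or_circuit_ket:
  "apply_circuit (or_circuit n) (ket (layout n x z)) = ket (layout n x (z \<noteq> OR_fun n x))"
proof -
  let ?b = "\<lambda>z v. (layout n x z)(Suc n := v)"
  have circuit: "apply_circuit (or_circuit n) (ket (layout n x z)) =
      apply_circuit (concat (kickback_layers n (- or_angle n))) (apply_gate (G1 n pauli_x)
        (apply_gate (CNOT (Suc n) n) (apply_circuit (concat (kickback_layers n (or_angle n))) (ket (?b z False)))))"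
    by (simp add: or_circuit_def or_layers_def apply_circuit_append layout_update_work del: apply_gate.simps)
  have flip: "apply_gate (G1 n pauli_x) (apply_gate (CNOT (Suc n) n) (ket (?b z v))) = ket (?b (z = v) v)" for v
    by (simp add: apply_CNOT_ket apply_pauli_x_ket layout_update_target layout_target layout_work
        layout_at_target del: apply_gate.simps)
  show ?thesis
  proof (cases "\<exists>j<n. x j")
    case True
    have "apply_circuit (or_circuit n) (ket (layout n x z)) =
        (\<lambda>b. (cis (or_angle n) ^ 2 ^ (n - 1) * cis (- or_angle n) ^ 2 ^ (n - 1)) * ket (?b (\<not> z) False) b)"
      unfolding circuit
      by (simp add: apply_kickback_nonzero[OF True] apply_gate_scale apply_circuit_scale flip mult.assoc
          del: apply_gate.simps)
    then show ?thesis
      using True by (simp add: power_mult_distrib[symmetric] cis_mult layout_update_work OR_fun_def)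
  next
    case False
    have "apply_circuit (or_circuit n) (ket (layout n x z)) =
        apply_circuit (concat (kickback_layers n (- or_angle n))) (ket (?b z True))"
      unfolding circuit by (simp only: apply_kickback_zero[OF False cis_or_angle_power(1)] flip) simp
    also have "\<dots> = ket (?b z False)"
      by (simp only: apply_kickback_zero[OF False cis_or_angle_power(2)]) simp
    finally show ?thesis
      using False by (simp add: layout_update_work OR_fun_def)
  qed
qed

section \<open>Depth, size and width\<close>

lemma gate_wires_nonempty: "gate_wires g \<noteq> []"
  by (cases g) auto

lemma layer_step_bound:
  assumes "\<forall>i\<in>set (gate_wires g). fst s i \<le> K" "\<forall>i. fst s i \<le> Suc K" "snd s \<le> Suc K"
  shows "(\<forall>i. fst (layer_step s g) i \<le> Suc K) \<and> snd (layer_step s g) \<le> Suc K \<and>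
         (\<forall>i. i \<notin> set (gate_wires g) \<longrightarrow> fst (layer_step s g) i = fst s i)"
proof -
  have "Max (fst s ` set (gate_wires g)) \<le> K"
    using assms(1) gate_wires_nonempty[of g] by (subst Max_le_iff) auto
  then show ?thesis
    using assms(2,3) by (auto simp: layer_step_def Let_def)
qed

text \<open>Gates on pairwise disjoint wires all fit into one layer on top of the current depth \<open>K\<close>.\<close>

lemma foldl_layer_step_bound:
  "distinct (circuit_wires gs) \<Longrightarrow> (\<forall>i\<in>set (circuit_wires gs). fst s i \<le> K) \<Longrightarrow>
   (\<forall>i. fst s i \<le> Suc K) \<Longrightarrow> snd s \<le> Suc K \<Longrightarrow>
   (\<forall>i. fst (foldl layer_step s gs) i \<le> Suc K) \<and> snd (foldl layer_step s gs) \<le> Suc K"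
proof (induction gs arbitrary: s)
  case (Cons g gs)
  have step: "(\<forall>i. fst (layer_step s g) i \<le> Suc K) \<and> snd (layer_step s g) \<le> Suc K \<and>
      (\<forall>i. i \<notin> set (gate_wires g) \<longrightarrow> fst (layer_step s g) i = fst s i)"
    using Cons.prems by (intro layer_step_bound) auto
  have "\<forall>i\<in>set (circuit_wires gs). fst (layer_step s g) i \<le> K"
    using step Cons.prems(1,2) by auto
  with step Cons.prems(1) show ?case
    using Cons.IH by simp
qed simp

lemma foldl_layer_step_concat_bound:
  "(\<forall>gs\<in>set gss. distinct (circuit_wires gs)) \<Longrightarrow> (\<forall>i. fst s i \<le> K) \<Longrightarrow> snd s \<le> K \<Longrightarrow>
   (\<forall>i. fst (foldl layer_step s (concat gss)) i \<le> K + length gss) \<and>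
   snd (foldl layer_step s (concat gss)) \<le> K + length gss"
proof (induction gss arbitrary: s K)
  case (Cons gs gss)
  have "(\<forall>i. fst (foldl layer_step s gs) i \<le> Suc K) \<and> snd (foldl layer_step s gs) \<le> Suc K"
    using Cons.prems by (intro foldl_layer_step_bound) (auto intro: le_SucI)
  then show ?case
    using Cons.prems(1) Cons.IH[of "foldl layer_step s gs" "Suc K"] by simp
qed simp

lemma circuit_depth_concat_le:
  "(\<forall>gs\<in>set gss. distinct (circuit_wires gs)) \<Longrightarrow> circuit_depth (concat gss) \<le> length gss"
  using foldl_layer_step_concat_bound[of gss "(\<lambda>_. 0, 0)" 0] by (simp add: circuit_depth_def)

lemma circuit_size_eq_length_circuit_wires: "circuit_size gs = length (circuit_wires gs)"
  by (induction gs) (auto simp: circuit_size_def)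

lemma circuit_size_concat: "circuit_size (concat gss) = (\<Sum>gs\<leftarrow>gss. circuit_size gs)"
  by (induction gss) (auto simp: circuit_size_def)

lemma set_or_layers:
  "set (or_layers n) = {[hadamard_gate (Suc n)], fanout_layer (copy_layer n),
     hadamard_layer (subset_parity_layer n), fanout_layer (subset_parity_layer n),
     phase_layer (or_angle n) (phase_wires n), phase_layer (- or_angle n) (phase_wires n),
     [CNOT (Suc n) n], [G1 n pauli_x]}"
  by (auto simp: or_layers_def kickback_layers_def)

lemma length_or_layers: "length (or_layers n) = 24"
  by (simp add: or_layers_def kickback_layers_def)

lemma or_circuit_depth: "circuit_depth (or_circuit n) \<le> 24"
proof -
  have "\<forall>gs\<in>set (or_layers n). distinct (circuit_wires gs)"
    using distinct_copy_layer[of n] distinct_subset_parity_layer[of n] distinct_phase_wires[of n]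
    by (auto simp: set_or_layers hadamard_gate_def)
  from circuit_depth_concat_le[OF this] show ?thesis
    by (simp add: or_circuit_def length_or_layers)
qed

lemma length_copy_layer_wires: "length (layer_wires (copy_layer n)) = (n + 1) * (2 ^ n + 1)"
  by (simp add: copy_layer_def layer_wires_map length_concat o_def sum_list_triv phase_wires_def)

lemma length_subset_parity_layer_wires: "length (layer_wires (subset_parity_layer n)) \<le> (n + 1) * (2 ^ n + 1)"
proof -
  have "length (layer_wires (subset_parity_layer n)) = (\<Sum>s\<leftarrow>[1..<2 ^ n]. Suc (length (subset_copies n s)))"
    by (simp add: subset_parity_layer_def layer_wires_map length_concat o_def)
  also have "\<dots> \<le> (\<Sum>s\<leftarrow>[1..<2 ^ n]. n + 1)"
    by (rule sum_list_mono) (simp add: subset_copies_def length_filter_le[THEN le_trans])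
  also have "\<dots> = (2 ^ n - 1) * (n + 1)"
    by (simp add: sum_list_triv)
  also have "\<dots> \<le> (2 ^ n + 1) * (n + 1)"
    by (intro mult_right_mono) auto
  finally show ?thesis
    by (simp add: mult.commute)
qed

lemma or_circuit_size:
  assumes "n \<ge> 1"
  shows "circuit_size (or_circuit n) \<le> 96 * n * 2 ^ n"
proof -
  have "(n + 1) * (2 ^ n + 1) \<le> (2 * n) * (2 * 2 ^ n)"
    using assms by (intro mult_mono) auto
  then have layer: "circuit_size gs \<le> 4 * n * 2 ^ n" if "gs \<in> set (or_layers n)" for gs
    using that assms length_copy_layer_wires[of n] length_subset_parity_layer_wires[of n]
    by (auto simp: set_or_layers circuit_size_eq_length_circuit_wires hadamard_gate_def phase_wires_def
        intro: order_trans[OF _ le_add2])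
  have "circuit_size (or_circuit n) = (\<Sum>gs\<leftarrow>or_layers n. circuit_size gs)"
    by (simp add: or_circuit_def circuit_size_concat)
  also have "\<dots> \<le> (\<Sum>gs\<leftarrow>or_layers n. 4 * n * 2 ^ n)"
    by (rule sum_list_mono) (rule layer)
  finally show ?thesis
    by (simp add: sum_list_triv length_or_layers)
qed

lemma gate_wf_hadamard_layer:
  "(\<forall>w\<in>set (layer_wires L). w < m) \<Longrightarrow> g \<in> set (hadamard_layer L) \<Longrightarrow> gate_wf m g"
  by (auto simp: hadamard_layer_def hadamard_gate_def unitary2_hadamard)

lemma gate_wf_fanout_layer:
  assumes "distinct (layer_wires L)" "\<forall>w\<in>set (layer_wires L). w < m" "\<forall>(y, T)\<in>set L. T \<noteq> []"
    and "g \<in> set (fanout_layer L)"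
  shows "gate_wf m g"
proof -
  obtain y T where g: "g = Fanout y T" "(y, T) \<in> set L"
    using assms(4) by (auto simp: fanout_layer_def)
  have "y \<notin> set T"
    using layer_control_notin_targets[OF assms(1) g(2) g(2)] .
  moreover have "distinct T"
    using assms(1) g(2) by (induction L) auto
  ultimately show ?thesis
    using g assms(2,3) by (auto simp: set_layer_wires)
qed

lemma copy_layer_wires_less: "w \<in> set (layer_wires (copy_layer n)) \<Longrightarrow> w < or_width n"
  using copy_wire_less by (auto simp: copy_layer_def layer_wires_map or_width_def phase_wires_def phase_wire_def)

lemma subset_parity_layer_wires_less: "w \<in> set (layer_wires (subset_parity_layer n)) \<Longrightarrow> w < or_width n"
  using copy_wire_less bit_less_power_imp_less
  by (force simp: subset_parity_layer_def layer_wires_map or_width_def phase_wire_def subset_copies_def)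

lemma subset_copies_nonempty:
  assumes "0 < s" "s < 2 ^ n"
  shows "subset_copies n s \<noteq> []"
proof -
  obtain i where "bit s i"
    using ex_bit_if_nonzero assms(1) by blast
  moreover have "i < n"
    using bit_less_power_imp_less[OF assms(2) \<open>bit s i\<close>] .
  ultimately show ?thesis
    by (auto simp: subset_copies_def filter_empty_conv)
qed

lemma or_circuit_wf: "circuit_wf (or_width n) (or_circuit n)"
  unfolding circuit_wf_def
proof
  fix g
  assume "g \<in> set (or_circuit n)"
  then obtain gs where gs: "gs \<in> set (or_layers n)" "g \<in> set gs"
    by (auto simp: or_circuit_def)
  have bounds: "\<forall>w\<in>set (layer_wires (copy_layer n)). w < or_width n"
      "\<forall>w\<in>set (layer_wires (subset_parity_layer n)). w < or_width n"
      "\<forall>q\<in>set (phase_wires n). q < or_width n"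
    using copy_layer_wires_less subset_parity_layer_wires_less
    by (auto simp: phase_wires_def phase_wire_def or_width_def)
  have "\<forall>(y, T)\<in>set (copy_layer n). T \<noteq> []"
    by (auto simp: copy_layer_def phase_wires_def)
  note copy = gate_wf_fanout_layer[OF distinct_copy_layer bounds(1) this]
  have "\<forall>(y, T)\<in>set (subset_parity_layer n). T \<noteq> []"
    using subset_copies_nonempty by (auto simp: subset_parity_layer_def)
  note parity = gate_wf_fanout_layer[OF distinct_subset_parity_layer bounds(2) this]
    gate_wf_hadamard_layer[OF bounds(2)]
  show "gate_wf (or_width n) g"
    using gs copy parity bounds(3)
    by (auto simp: set_or_layers phase_layer_def hadamard_gate_def unitary2_hadamard unitary2_phase_shift
        unitary2_pauli_x or_width_def)
qed

theorem lemma2: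
  shows "\<exists>(C :: nat \<Rightarrow> gate list) (m :: nat \<Rightarrow> nat) (d :: nat) (c :: nat).
           \<forall>n\<ge>1. implements_OR n (m n) (C n) \<and> circuit_depth (C n) \<le> d \<and>
                  circuit_size (C n) \<le> c * n * 2 ^ n"
proof (intro exI allI impI conjI)
  fix n :: nat
  assume "n \<ge> 1"
  show "implements_OR n (or_width n) (or_circuit n)"
    using or_circuit_wf apply_or_circuit_ket by (auto simp: implements_OR_def or_width_def)
  show "circuit_depth (or_circuit n) \<le> 24"
    by (rule or_circuit_depth)
  show "circuit_size (or_circuit n) \<le> 96 * n * 2 ^ n"
    using \<open>n \<ge> 1\<close> by (rule or_circuit_size)
qed

end
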